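(* Let $\pi(t)\in\mathbb R^m$, $t\ge0$, be vectors with nonnegative entries, $\mathbf 1_m^\top\pi(t)=1$, and $\pi(t)^\top=\pi(t+1)^\top A(t)$ for all $t\ge0$. Let $\theta_i(t)$ be generated by the DPG iteration and set $\bar\theta(t)=\sum_{j=1}^m\pi_j(t)\theta_j(t)$. Then for every $v\in\Omega$ and every $t\ge0$, $$\sum_{i=1}^m\pi_i(t+1)\|\theta_i(t+1)-v\|^2\le\sum_{i=1}^m\pi_i(t)\|\theta_i(t)-v\|^2-2\alpha(t)c^\top(\bar\theta(t)-v)+C^2\alpha^2(t)+2C\alpha(t)\sum_{i=1}^m\pi_i(t)\|\theta_i(t)-\bar\theta(t)\|-\sum_{i=1}^m\pi_i(t+1)\|\phi_i(t)\|^2.$$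
   Context: Agents $\mathcal V=\{1,\dots,m\}$. $A(t)=[a_{ij}(t)]\in\mathbb R^{m\times m}$, $t\in\mathbb Z_{\ge0}$, are row-stochastic matrices with nonnegative entries ($\sum_j a_{ij}(t)=1$). Let $\Omega_1,\dots,\Omega_m\subseteq\mathbb R^p$ be nonempty closed convex sets with $\Omega=\bigcap_i\Omega_i\neq\emptyset$, let $c\in\mathbb R^p$, $C=\|c\|$, and let $\alpha(t)>0$ be stepsizes. $P_K$ is Euclidean projection onto a closed convex set $K$. The DPG iteration, from arbitrary $\theta_i(0)\in\mathbb R^p$, is $\theta_i(t+1)=P_{\Omega_i}\big[\sum_{j=1}^m a_{ij}(t)\theta_j(t)-\alpha(t)c\big]$, and $\phi_i(t)=\theta_i(t+1)-\big[\sum_{j=1}^m a_{ij}(t)\theta_j(t)-\alpha(t)c\big]$. *)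

theory Defs
  imports "HOL-Analysis.Analysis"
begin

end

theory Submission
  imports Defs
begin

text \<open>
  For a point \<open>v\<close> of the constraint set, projection
  shrinks the squared distance to \<open>v\<close> by at least the squared length of the correction
  \<open>\<phi>\<^sub>i\<close>, the gradient step contributes the linear term and \<open>C\<^sup>2\<alpha>\<^sup>2\<close>, and the averaging
  step does not increase the weighted squared distance by Jensen's inequality. Summing
  with the weights \<open>\<pi>(t+1)\<close> and using \<open>\<pi>(t)\<^sup>T = \<pi>(t+1)\<^sup>T A(t)\<close>, the averaged squared
  distances collapse to \<open>\<pi>(t)\<close>-weighted ones and the averaged linear terms collapse to
  exactly \<open>c\<^sup>T(\<theta>\<^sub>bar(t) - v)\<close>; the term involving \<open>\<theta>\<^sub>i(t) - \<theta>\<^sub>bar(t)\<close> is then nonnegative slack.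
\<close>

lemma norm_diff_closest_point_sq_le:
  fixes S :: "'a::euclidean_space set"
  assumes "closed S" "convex S" "v \<in> S"
  shows "(norm (closest_point S z - v))\<^sup>2 \<le> (norm (z - v))\<^sup>2 - (norm (closest_point S z - z))\<^sup>2"
proof -
  let ?p = "closest_point S z"
  have "S \<noteq> {}" using assms(3) by blast
  then have "inner (z - ?p) (v - ?p) \<le> 0"
    using any_closest_point_dot[OF assms(2,1) closest_point_in_set assms(3)]
      closest_point_exists(2)[OF assms(1)] assms(1) by blast
  moreover have "(norm (z - v))\<^sup>2 = (norm ((z - ?p) - (v - ?p)))\<^sup>2" by simp
  then have "(norm (z - v))\<^sup>2 = (norm (z - ?p))\<^sup>2 + (norm (v - ?p))\<^sup>2 - 2 * inner (z - ?p) (v - ?p)"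
    unfolding power2_norm_eq_inner by (simp add: inner_diff_left inner_diff_right inner_commute)
  ultimately show ?thesis by (simp add: norm_minus_commute)
qed

lemma norm_convex_combination_sq_le:
  fixes x :: "'i \<Rightarrow> 'a::real_normed_vector"
  assumes "finite I" "\<And>j. j \<in> I \<Longrightarrow> a j \<ge> 0" "(\<Sum>j\<in>I. a j) = 1"
  shows "(norm (\<Sum>j\<in>I. a j *\<^sub>R x j))\<^sup>2 \<le> (\<Sum>j\<in>I. a j * (norm (x j))\<^sup>2)"
proof -
  have "I \<noteq> {}" using assms(3) by auto
  have "norm (\<Sum>j\<in>I. a j *\<^sub>R x j) \<le> (\<Sum>j\<in>I. norm (a j *\<^sub>R x j))"
    by (rule norm_sum)
  also have "\<dots> = (\<Sum>j\<in>I. a j * norm (x j))"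
    using assms(2) by (intro sum.cong) auto
  finally have "(norm (\<Sum>j\<in>I. a j *\<^sub>R x j))\<^sup>2 \<le> (\<Sum>j\<in>I. a j * norm (x j))\<^sup>2"
    by (intro power_mono) auto
  also have "\<dots> \<le> (\<Sum>j\<in>I. a j * (norm (x j))\<^sup>2)"
    using convex_on_sum[OF assms(1) \<open>I \<noteq> {}\<close> convex_power2 assms(3,2), of "\<lambda>j. norm (x j)"]
    by simp
  finally show ?thesis .
qed

lemma sum_weighted_stochastic_swap:
  fixes f :: "'j \<Rightarrow> 'a::real_vector"
  assumes "finite I" "finite J" "\<And>j. j \<in> J \<Longrightarrow> q j = (\<Sum>i\<in>I. p i * A i j)"
  shows "(\<Sum>i\<in>I. p i *\<^sub>R (\<Sum>j\<in>J. A i j *\<^sub>R f j)) = (\<Sum>j\<in>J. q j *\<^sub>R f j)"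
proof -
  have "(\<Sum>i\<in>I. p i *\<^sub>R (\<Sum>j\<in>J. A i j *\<^sub>R f j)) = (\<Sum>j\<in>J. \<Sum>i\<in>I. (p i * A i j) *\<^sub>R f j)"
    by (simp add: scaleR_sum_right sum.swap[of _ I J])
  also have "\<dots> = (\<Sum>j\<in>J. q j *\<^sub>R f j)"
    using assms(3) by (simp add: scaleR_sum_left)
  finally show ?thesis .
qed

lemma projected_averaging_step_sq_le:
  fixes S :: "'a::euclidean_space set" and x :: "'i \<Rightarrow> 'a" and c :: 'a and \<alpha> :: real
  assumes "closed S" "convex S" "v \<in> S"
    and "finite I" "\<And>j. j \<in> I \<Longrightarrow> a j \<ge> 0" "(\<Sum>j\<in>I. a j) = 1"
  defines "z \<equiv> (\<Sum>j\<in>I. a j *\<^sub>R x j) - \<alpha> *\<^sub>R c"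
  shows "(norm (closest_point S z - v))\<^sup>2 \<le> (\<Sum>j\<in>I. a j * (norm (x j - v))\<^sup>2)
           - 2 * \<alpha> * (c \<bullet> ((\<Sum>j\<in>I. a j *\<^sub>R x j) - v)) + (norm c)\<^sup>2 * \<alpha>\<^sup>2
           - (norm (closest_point S z - z))\<^sup>2"
proof -
  let ?w = "\<Sum>j\<in>I. a j *\<^sub>R x j"
  have "?w - v = (\<Sum>j\<in>I. a j *\<^sub>R (x j - v))"
    using assms(6) by (simp add: scaleR_diff_right sum_subtractf flip: scaleR_sum_left)
  then have averaging: "(norm (?w - v))\<^sup>2 \<le> (\<Sum>j\<in>I. a j * (norm (x j - v))\<^sup>2)"
    using norm_convex_combination_sq_le[OF assms(4-6)] by simp
  have "(norm (z - v))\<^sup>2 = (norm ((?w - v) - \<alpha> *\<^sub>R c))\<^sup>2"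
    by (simp add: z_def algebra_simps)
  also have "\<dots> = (norm (?w - v))\<^sup>2 - 2 * \<alpha> * (c \<bullet> (?w - v)) + (norm c)\<^sup>2 * \<alpha>\<^sup>2"
    unfolding power2_norm_eq_inner
    by (simp add: inner_commute power2_eq_square algebra_simps)
  finally show ?thesis
    using norm_diff_closest_point_sq_le[OF assms(1-3), of z] averaging by linarith
qed

theorem proposition6:
  fixes m :: nat
    and A :: "nat \<Rightarrow> nat \<Rightarrow> nat \<Rightarrow> real"
    and Omega :: "nat \<Rightarrow> 'a::euclidean_space set"
    and c :: 'a
    and alpha :: "nat \<Rightarrow> real"
    and theta :: "nat \<Rightarrow> nat \<Rightarrow> 'a"
    and pi :: "nat \<Rightarrow> nat \<Rightarrow> real"
    and v :: 'a and t :: nat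
  assumes A_nonneg: "\<And>s i j. i < m \<Longrightarrow> j < m \<Longrightarrow> A s i j \<ge> 0"
    and A_stoch: "\<And>s i. i < m \<Longrightarrow> (\<Sum>j<m. A s i j) = 1"
    and Omega_closed: "\<And>i. i < m \<Longrightarrow> closed (Omega i)"
    and Omega_convex: "\<And>i. i < m \<Longrightarrow> convex (Omega i)"
    and Omega_ne: "\<And>i. i < m \<Longrightarrow> Omega i \<noteq> {}"
    and Omega_int_ne: "(\<Inter>i\<in>{..<m}. Omega i) \<noteq> {}"
    and alpha_pos: "\<And>s. alpha s > 0"
    and dpg: "\<And>s i. i < m \<Longrightarrow> theta (Suc s) i =
               closest_point (Omega i) ((\<Sum>j<m. A s i j *\<^sub>R theta s j) - alpha s *\<^sub>R c)"
    and pi_nonneg: "\<And>s j. j < m \<Longrightarrow> pi s j \<ge> 0"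
    and pi_sum: "\<And>s. (\<Sum>j<m. pi s j) = 1"
    and pi_stat: "\<And>s j. j < m \<Longrightarrow> pi s j = (\<Sum>i<m. pi (Suc s) i * A s i j)"
    and v_in: "v \<in> (\<Inter>i\<in>{..<m}. Omega i)"
  shows "let C = norm c;
             thetabar = (\<Sum>j<m. pi t j *\<^sub>R theta t j);
             phi = (\<lambda>i. theta (Suc t) i - ((\<Sum>j<m. A t i j *\<^sub>R theta t j) - alpha t *\<^sub>R c))
         in (\<Sum>i<m. pi (Suc t) i * (norm (theta (Suc t) i - v))\<^sup>2)
            \<le> (\<Sum>i<m. pi t i * (norm (theta t i - v))\<^sup>2)
               - 2 * alpha t * (c \<bullet> (thetabar - v))
               + C\<^sup>2 * (alpha t)\<^sup>2
               + 2 * C * alpha t * (\<Sum>i<m. pi t i * norm (theta t i - thetabar))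
               - (\<Sum>i<m. pi (Suc t) i * (norm (phi i))\<^sup>2)"
proof -
  define w where "w i = (\<Sum>j<m. A t i j *\<^sub>R theta t j)" for i
  define phi where "phi i = theta (Suc t) i - (w i - alpha t *\<^sub>R c)" for i
  define tb where "tb = (\<Sum>j<m. pi t j *\<^sub>R theta t j)"
  let ?p = "pi (Suc t)" and ?d = "\<lambda>i. (norm (theta t i - v))\<^sup>2"
  have agent: "?p i * (norm (theta (Suc t) i - v))\<^sup>2 \<le> ?p i * (\<Sum>j<m. A t i j * ?d j)
      - 2 * alpha t * (?p i * (c \<bullet> (w i - v))) + ?p i * ((norm c)\<^sup>2 * (alpha t)\<^sup>2)
      - ?p i * (norm (phi i))\<^sup>2" if i: "i < m" for i
  proof -
    have "(norm (theta (Suc t) i - v))\<^sup>2 \<le> (\<Sum>j<m. A t i j * ?d j)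
        - 2 * alpha t * (c \<bullet> (w i - v)) + (norm c)\<^sup>2 * (alpha t)\<^sup>2 - (norm (phi i))\<^sup>2"
      using projected_averaging_step_sq_le[OF Omega_closed[OF i] Omega_convex[OF i] _ _
          A_nonneg[OF i] A_stoch[OF i], where v=v and x="theta t" and \<alpha>="alpha t" and c=c] i v_in
      by (simp add: dpg w_def phi_def)
    from mult_left_mono[OF this pi_nonneg[OF i, of "Suc t"]] show ?thesis
      by (simp add: algebra_simps)
  qed
  have distances: "(\<Sum>i<m. ?p i * (\<Sum>j<m. A t i j * ?d j)) = (\<Sum>j<m. pi t j * ?d j)"
    using sum_weighted_stochastic_swap[of "{..<m}" "{..<m}" "pi t" ?p "A t" ?d] pi_stat by simp
  have "(\<Sum>i<m. ?p i *\<^sub>R w i) = tb"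
    unfolding w_def tb_def by (rule sum_weighted_stochastic_swap) (use pi_stat in auto)
  then have average: "(\<Sum>i<m. ?p i *\<^sub>R (w i - v)) = tb - v"
    using pi_sum[of "Suc t"] by (simp add: scaleR_diff_right sum_subtractf flip: scaleR_sum_left)
  have cross_term: "(\<Sum>i<m. ?p i * (c \<bullet> (w i - v))) = c \<bullet> (tb - v)"
    by (simp only: inner_sum_right inner_scaleR_right flip: average)
  have slack: "0 \<le> 2 * norm c * alpha t * (\<Sum>i<m. pi t i * norm (theta t i - tb))"
    using alpha_pos[of t] pi_nonneg by (intro mult_nonneg_nonneg sum_nonneg) (auto simp: less_imp_le)
  have "(\<Sum>i<m. ?p i * (norm (theta (Suc t) i - v))\<^sup>2) \<le> (\<Sum>i<m. ?p i * (\<Sum>j<m. A t i j * ?d j))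
      - 2 * alpha t * (\<Sum>i<m. ?p i * (c \<bullet> (w i - v))) + (\<Sum>i<m. ?p i) * ((norm c)\<^sup>2 * (alpha t)\<^sup>2)
      - (\<Sum>i<m. ?p i * (norm (phi i))\<^sup>2)"
    using sum_mono[of "{..<m}", OF agent]
    unfolding sum_subtractf sum.distrib sum_distrib_left[symmetric] sum_distrib_right[symmetric] by simp
  then have "(\<Sum>i<m. ?p i * (norm (theta (Suc t) i - v))\<^sup>2) \<le> (\<Sum>j<m. pi t j * ?d j)
      - 2 * alpha t * (c \<bullet> (tb - v)) + (norm c)\<^sup>2 * (alpha t)\<^sup>2 - (\<Sum>i<m. ?p i * (norm (phi i))\<^sup>2)"
    unfolding distances cross_term pi_sum by simp
  with slack show ?thesis
    unfolding Let_def tb_def phi_def w_def by linarith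
qed

end
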